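(* Let $X\subset\mathbb{R}^n$ be a closed set which is the closure of its interior, $f:X\to\mathbb{R}^n$ locally Lipschitz, and suppose $\dot x=f(x)$ is forward complete with flow $\varphi_t$. Let $K$ be a closed convex cone with nonempty interior and suppose the system is strongly monotone in reversed time: for every $\xi_1,\xi_2\in X$ and every $t<0$ such that $\varphi_t(\xi_1),\varphi_t(\xi_2)$ are defined, $\xi_1\succ\xi_2$ implies $\varphi_t(\xi_1)\gg\varphi_t(\xi_2)$. Let $v\in\operatorname{int}(K)$, $|v|=1$, with $X$ invariant under translation by $v$ and $\varphi_t(\xi+\lambda v)=\varphi_t(\xi)+\lambda v$ for all $\lambda\in\mathbb{R}$, $\xi\in X$ and all $t$ at which $\varphi_t(\xi)$ is defined. Let $V(x)=\inf\{\alpha\in\mathbb{R}:x\preceq\alpha v\}$. Then for all $\xi_1,\xi_2\in X$ and all $t>0$, $$V(\varphi_t(\xi_1)-\varphi_t(\xi_2))\ge V(\xi_1-\xi_2),$$ and the inequality is strict whenever $\xi_1-\xi_2\notin\operatorname{span}\{v\}$.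
   Context: The cone $K$ satisfies $K+K\subset K$, $\alpha K\subset K$ for $\alpha\ge0$, $K\cap(-K)=\{0\}$. $\xi_1\succeq\xi_2$ iff $\xi_1-\xi_2\in K$; $\xi_1\succ\xi_2$ iff additionally $\xi_1\neq\xi_2$; $\xi_1\gg\xi_2$ iff $\xi_1-\xi_2\in\operatorname{int}(K)$. Forward complete means every solution is uniquely defined in $X$ on an interval containing $[0,\infty)$ in its interior. *)

theory Defs
  imports "HOL-Analysis.Analysis"
begin

definition loc_lipschitz_on :: "('a::metric_space) set \<Rightarrow> ('a \<Rightarrow> 'b::metric_space) \<Rightarrow> bool" where
  "loc_lipschitz_on X f \<longleftrightarrow>
     (\<forall>x\<in>X. \<exists>e>0. \<exists>L. L-lipschitz_on (cball x e \<inter> X) f)"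

definition is_solution :: "('a::real_normed_vector) set \<Rightarrow> ('a \<Rightarrow> 'a) \<Rightarrow> (real \<Rightarrow> 'a) \<Rightarrow> real set \<Rightarrow> bool" where
  "is_solution X f x I \<longleftrightarrow> is_interval I \<and> open I \<and> 0 \<in> I \<and>
     (\<forall>t\<in>I. x t \<in> X \<and> (x has_vector_derivative f (x t)) (at t))"

definition flow_defined :: "('a::real_normed_vector) set \<Rightarrow> ('a \<Rightarrow> 'a) \<Rightarrow> real \<Rightarrow> 'a \<Rightarrow> bool" where
  "flow_defined X f t xi \<longleftrightarrow> (\<exists>x I. is_solution X f x I \<and> x 0 = xi \<and> t \<in> I)"

definition flow :: "('a::real_normed_vector) set \<Rightarrow> ('a \<Rightarrow> 'a) \<Rightarrow> real \<Rightarrow> 'a \<Rightarrow> 'a" where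
  "flow X f t xi = (THE y. \<exists>x I. is_solution X f x I \<and> x 0 = xi \<and> t \<in> I \<and> x t = y)"

definition forward_complete :: "('a::real_normed_vector) set \<Rightarrow> ('a \<Rightarrow> 'a) \<Rightarrow> bool" where
  "forward_complete X f \<longleftrightarrow>
     (\<forall>xi\<in>X. \<exists>x I. is_solution X f x I \<and> x 0 = xi \<and> {0..} \<subseteq> I) \<and>
     (\<forall>x I y J. is_solution X f x I \<longrightarrow> is_solution X f y J \<longrightarrow> x 0 = y 0 \<longrightarrow>
        (\<forall>t\<in>I \<inter> J. x t = y t))"

definition is_cone :: "('a::real_vector) set \<Rightarrow> bool" where
  "is_cone K \<longleftrightarrow> (\<forall>a\<in>K. \<forall>b\<in>K. a + b \<in> K) \<and> (\<forall>a\<in>K. \<forall>\<alpha>::real. \<alpha> \<ge> 0 \<longrightarrow> \<alpha> *\<^sub>R a \<in> K)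
     \<and> K \<inter> uminus ` K = {0}"

definition Vfun :: "('a::real_vector) set \<Rightarrow> 'a \<Rightarrow> 'a \<Rightarrow> real" where
  "Vfun K v x = Inf {\<alpha>::real. \<alpha> *\<^sub>R v - x \<in> K}"

end

theory Submission
  imports Defs
begin

text \<open>Put \<open>a = V(\<phi>\<^sub>t \<xi>\<^sub>1 - \<phi>\<^sub>t \<xi>\<^sub>2)\<close>. Since \<open>K\<close> is closed the infimum is attained, so
  \<open>\<phi>\<^sub>t \<xi>\<^sub>1 \<preceq> \<phi>\<^sub>t \<xi>\<^sub>2 + a v\<close>. The flow commutes with translation along \<open>v\<close>, so flowing
  both sides back for time \<open>t\<close> and using strong monotonicity in reversed time gives
  \<open>\<xi>\<^sub>1 \<preceq> \<xi>\<^sub>2 + a v\<close>, hence \<open>V(\<xi>\<^sub>1 - \<xi>\<^sub>2) \<le> a\<close>; the comparison is even \<open>\<ll>\<close> unless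
  \<open>\<phi>\<^sub>t \<xi>\<^sub>1 = \<phi>\<^sub>t \<xi>\<^sub>2 + a v\<close>, i.e. unless \<open>\<xi>\<^sub>1 - \<xi>\<^sub>2 = a v\<close>. As \<open>int K\<close> is open, \<open>\<ll>\<close> allows
  lowering \<open>a\<close> a little, which gives the strict inequality.\<close>

lemma flow_defined_solution:
  assumes "is_solution X f x I" and "t \<in> I"
  shows "flow_defined X f t (x 0)"
  using assms unfolding flow_defined_def by blast

lemma flow_solution:
  assumes fc: "forward_complete X f" and sol: "is_solution X f x I" and t: "t \<in> I"
  shows "flow X f t (x 0) = x t"
  unfolding flow_def
proof (rule the_equality)
  show "\<exists>x' I'. is_solution X f x' I' \<and> x' 0 = x 0 \<and> t \<in> I' \<and> x' t = x t"
    using sol t by blast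
next
  fix y assume "\<exists>x' I'. is_solution X f x' I' \<and> x' 0 = x 0 \<and> t \<in> I' \<and> x' t = y"
  then obtain x' I' where "is_solution X f x' I'" "x' 0 = x 0" "t \<in> I'" "x' t = y"
    by blast
  with fc sol t show "y = x t"
    unfolding forward_complete_def by (metis IntI)
qed

lemma is_solution_shift:
  assumes sol: "is_solution X f x I" and t: "t \<in> I"
  shows "is_solution X f (\<lambda>s. x (s + t)) ((+) (-t) ` I)"
proof -
  have I: "is_interval I" "open I"
    and deriv: "\<And>s. s \<in> I \<Longrightarrow> x s \<in> X \<and> (x has_vector_derivative f (x s)) (at s)"
    using sol unfolding is_solution_def by auto
  have "\<forall>s\<in>(+) (-t) ` I. x (s + t) \<in> X \<and>
      ((\<lambda>s. x (s + t)) has_vector_derivative f (x (s + t))) (at s)"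
  proof
    fix s assume "s \<in> (+) (-t) ` I"
    then have s: "s + t \<in> I"
      by auto
    have "((\<lambda>s. s + t) has_vector_derivative 1) (at s)"
      by (auto intro!: derivative_eq_intros
          simp: has_real_derivative_iff_has_vector_derivative[symmetric])
    then have "(x \<circ> (\<lambda>s. s + t) has_vector_derivative (1::real) *\<^sub>R f (x (s + t))) (at s)"
      by (rule vector_diff_chain_at) (use deriv[OF s] in auto)
    then show "x (s + t) \<in> X \<and> ((\<lambda>s. x (s + t)) has_vector_derivative f (x (s + t))) (at s)"
      using deriv[OF s] by (simp add: o_def)
  qed
  moreover have "is_interval ((+) (-t) ` I)"
    using I(1) by simp
  moreover have "open ((+) (-t) ` I)"
    using open_translation[OF I(2), of "-t"] by simp
  moreover have "0 \<in> (+) (-t) ` I"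
    using t by force
  ultimately show ?thesis
    unfolding is_solution_def by blast
qed

lemma flow_backward:
  assumes fc: "forward_complete X f" and xi: "xi \<in> X" and t: "t \<ge> 0"
  shows "flow X f t xi \<in> X" and "flow_defined X f (-t) (flow X f t xi)"
    and "flow X f (-t) (flow X f t xi) = xi"
proof -
  obtain x I where sol: "is_solution X f x I" and x0: "x 0 = xi" and I: "{0..} \<subseteq> I"
    using fc xi unfolding forward_complete_def by blast
  have tI: "t \<in> I"
    using I t by auto
  have flow_t: "flow X f t xi = x t"
    using flow_solution[OF fc sol tI] x0 by simp
  have shifted: "is_solution X f (\<lambda>s. x (s + t)) ((+) (-t) ` I)"
    by (rule is_solution_shift[OF sol tI])
  have minus_t: "-t \<in> (+) (-t) ` I"
    using sol unfolding is_solution_def by force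
  note returned = flow_defined_solution[OF shifted minus_t] flow_solution[OF fc shifted minus_t]
  show "flow X f t xi \<in> X"
    using sol tI flow_t unfolding is_solution_def by auto
  show "flow_defined X f (-t) (flow X f t xi)" "flow X f (-t) (flow X f t xi) = xi"
    using returned flow_t x0 by simp_all
qed

lemma is_cone_zero: "is_cone K \<Longrightarrow> 0 \<in> K"
  unfolding is_cone_def by blast

lemma is_cone_scaleR_nonneg:
  assumes K: "is_cone K" and v: "v \<in> K" "v \<noteq> 0" and cv: "c *\<^sub>R v \<in> K"
  shows "c \<ge> 0"
proof (rule ccontr)
  assume "\<not> c \<ge> 0"
  then have "- inverse c \<ge> 0"
    by simp
  then have "(- inverse c) *\<^sub>R (c *\<^sub>R v) \<in> K"
    using K cv unfolding is_cone_def by blast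
  moreover have "(- inverse c) *\<^sub>R (c *\<^sub>R v) = - v"
    using \<open>\<not> c \<ge> 0\<close> by simp
  ultimately have "-v \<in> K"
    by simp
  then have "v \<in> K \<inter> uminus ` K"
    using v by (metis IntI image_eqI minus_minus)
  with K v show False
    unfolding is_cone_def by blast
qed

lemma is_cone_interior_order_unit:
  fixes K :: "'a::real_normed_vector set"
  assumes K: "is_cone K" and v: "v \<in> interior K"
  shows "\<exists>a. a *\<^sub>R v - x \<in> K"
proof -
  obtain r where r: "r > 0" "ball v r \<subseteq> K"
    using v by (meson mem_interior)
  define a where "a = norm x / r + 1"
  have a: "a > 0"
    unfolding a_def using r by (simp add: add_nonneg_pos)
  have "norm x < a * r"
    unfolding a_def using r by (simp add: distrib_right)
  then have "norm ((1 / a) *\<^sub>R x) < r"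
    using a by (simp add: field_simps)
  then have "v - (1 / a) *\<^sub>R x \<in> K"
    using r by (auto simp: dist_norm)
  then have "a *\<^sub>R (v - (1 / a) *\<^sub>R x) \<in> K"
    using K a unfolding is_cone_def by (meson less_imp_le)
  then show ?thesis
    using a by (auto simp: algebra_simps)
qed

lemma Vfun_bdd_below:
  fixes K :: "'a::real_normed_vector set"
  assumes K: "is_cone K" and v: "v \<in> interior K" "v \<noteq> 0"
  shows "bdd_below {\<alpha>. \<alpha> *\<^sub>R v - x \<in> K}"
proof -
  obtain M where M: "M *\<^sub>R v - (- x) \<in> K"
    using is_cone_interior_order_unit[OF K v(1)] by blast
  show ?thesis
  proof (rule bdd_belowI)
    fix \<alpha> assume "\<alpha> \<in> {\<alpha>. \<alpha> *\<^sub>R v - x \<in> K}"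
    then have "(\<alpha> *\<^sub>R v - x) + (M *\<^sub>R v - (- x)) \<in> K"
      using M K unfolding is_cone_def by blast
    then have "(\<alpha> + M) *\<^sub>R v \<in> K"
      by (simp add: algebra_simps)
    with is_cone_scaleR_nonneg[OF K _ v(2)] have "\<alpha> + M \<ge> 0"
      using v(1) interior_subset by blast
    then show "- M \<le> \<alpha>"
      by simp
  qed
qed

lemma Vfun_le:
  fixes K :: "'a::real_normed_vector set"
  assumes "is_cone K" and "v \<in> interior K" "v \<noteq> 0" and "a *\<^sub>R v - x \<in> K"
  shows "Vfun K v x \<le> a"
  unfolding Vfun_def using assms by (intro cInf_lower Vfun_bdd_below) auto

lemma Vfun_attained:
  fixes K :: "'a::real_normed_vector set"
  assumes K: "is_cone K" "closed K" and v: "v \<in> interior K" "v \<noteq> 0"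
  shows "Vfun K v x *\<^sub>R v - x \<in> K"
proof -
  let ?S = "{\<alpha>::real. \<alpha> *\<^sub>R v - x \<in> K}"
  have S_eq: "?S = (\<lambda>\<alpha>. \<alpha> *\<^sub>R v - x) -` K"
    by auto
  have closed: "closed ?S"
    unfolding S_eq by (rule continuous_closed_vimage[OF K(2)]) (intro continuous_intros)
  have nonempty: "?S \<noteq> {}"
    using is_cone_interior_order_unit[OF K(1) v(1)] by blast
  have "Inf ?S \<in> ?S"
    by (rule closed_contains_Inf[OF nonempty Vfun_bdd_below[OF K(1) v] closed])
  then show ?thesis
    by (simp add: Vfun_def)
qed

lemma Vfun_less:
  fixes K :: "'a::real_normed_vector set"
  assumes K: "is_cone K" and v: "v \<in> interior K" "v \<noteq> 0"
    and a: "a *\<^sub>R v - x \<in> interior K"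
  shows "Vfun K v x < a"
proof -
  obtain e where e: "e > 0" "ball (a *\<^sub>R v - x) e \<subseteq> interior K"
    using a open_interior openE by blast
  define d where "d = e / (2 * norm v)"
  have v_pos: "norm v > 0"
    using v(2) by simp
  then have d: "d > 0"
    using e(1) by (simp add: d_def)
  have "norm (d *\<^sub>R v) = d * norm v"
    using d by simp
  also have "\<dots> = e / 2"
    using v_pos by (simp add: d_def)
  also have "\<dots> < e"
    using e(1) by simp
  finally have "(a - d) *\<^sub>R v - x \<in> ball (a *\<^sub>R v - x) e"
    by (simp add: dist_norm algebra_simps)
  then have "(a - d) *\<^sub>R v - x \<in> K"
    using e interior_subset by blast
  then have "Vfun K v x \<le> a - d"
    by (rule Vfun_le[OF K v])
  with d show ?thesis
    by simp
qed

lemma flow_backward_comparison: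
  assumes fc: "forward_complete X f" and K: "is_cone K"
    and mono: "\<forall>\<xi>1\<in>X. \<forall>\<xi>2\<in>X. \<forall>t<0. flow_defined X f t \<xi>1 \<and> flow_defined X f t \<xi>2 \<and>
                 \<xi>1 - \<xi>2 \<in> K \<and> \<xi>1 \<noteq> \<xi>2 \<longrightarrow> flow X f t \<xi>1 - flow X f t \<xi>2 \<in> interior K"
    and X_trans: "\<forall>\<xi>\<in>X. \<forall>c::real. \<xi> + c *\<^sub>R v \<in> X"
    and flow_trans: "\<forall>\<xi>\<in>X. \<forall>c::real. \<forall>t. flow_defined X f t \<xi> \<longrightarrow>
                 flow_defined X f t (\<xi> + c *\<^sub>R v) \<and>
                 flow X f t (\<xi> + c *\<^sub>R v) = flow X f t \<xi> + c *\<^sub>R v"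
    and \<xi>: "\<xi>1 \<in> X" "\<xi>2 \<in> X" and t: "t > 0"
    and below: "a *\<^sub>R v - (flow X f t \<xi>1 - flow X f t \<xi>2) \<in> K"
  shows "a *\<^sub>R v - (\<xi>1 - \<xi>2) \<in> K"
    and "\<xi>1 - \<xi>2 \<notin> span {v} \<Longrightarrow> a *\<^sub>R v - (\<xi>1 - \<xi>2) \<in> interior K"
proof -
  define y1 where "y1 = flow X f t \<xi>1"
  define y2 where "y2 = flow X f t \<xi>2"
  note y1 = flow_backward[OF fc \<xi>(1) less_imp_le[OF t], folded y1_def]
  note y2 = flow_backward[OF fc \<xi>(2) less_imp_le[OF t], folded y2_def]
  have y2a: "y2 + a *\<^sub>R v \<in> X" "flow_defined X f (-t) (y2 + a *\<^sub>R v)"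
    "flow X f (-t) (y2 + a *\<^sub>R v) = \<xi>2 + a *\<^sub>R v"
    using X_trans flow_trans y2 by auto
  have strict: "a *\<^sub>R v - (\<xi>1 - \<xi>2) \<in> interior K" if "y2 + a *\<^sub>R v \<noteq> y1"
  proof -
    have "(y2 + a *\<^sub>R v) - y1 \<in> K"
      using below unfolding y1_def y2_def by (simp add: algebra_simps)
    moreover have "-t < 0"
      using t by simp
    ultimately have "flow X f (-t) (y2 + a *\<^sub>R v) - flow X f (-t) y1 \<in> interior K"
      using mono y1(1,2) y2a(1,2) that by blast
    then show ?thesis
      using y1(3) y2a(3) by (simp add: algebra_simps)
  qed
  have equal: "\<xi>1 - \<xi>2 = a *\<^sub>R v" if "y2 + a *\<^sub>R v = y1"
    using y1(3) y2a(3) that by auto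
  show "a *\<^sub>R v - (\<xi>1 - \<xi>2) \<in> K"
    using strict equal is_cone_zero[OF K] interior_subset by (cases "y2 + a *\<^sub>R v = y1") auto
  have "a *\<^sub>R v \<in> span {v}"
    by (simp add: span_base span_scale)
  then show "\<xi>1 - \<xi>2 \<notin> span {v} \<Longrightarrow> a *\<^sub>R v - (\<xi>1 - \<xi>2) \<in> interior K"
    using strict equal by metis
qed

theorem corollary1:
  fixes X K :: "(real ^ 'n) set" and f :: "real ^ 'n \<Rightarrow> real ^ 'n" and v :: "real ^ 'n"
  assumes X_closed: "closed X" and X_reg: "X = closure (interior X)"
    and f_lip: "loc_lipschitz_on X f"
    and fc: "forward_complete X f"
    and K_cone: "is_cone K" and K_closed: "closed K" and K_convex: "convex K"
    and K_int: "interior K \<noteq> {}"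
    and mono: "\<forall>\<xi>1\<in>X. \<forall>\<xi>2\<in>X. \<forall>t<0. flow_defined X f t \<xi>1 \<and> flow_defined X f t \<xi>2 \<and>
                 \<xi>1 - \<xi>2 \<in> K \<and> \<xi>1 \<noteq> \<xi>2 \<longrightarrow> flow X f t \<xi>1 - flow X f t \<xi>2 \<in> interior K"
    and v_int: "v \<in> interior K" and v_norm: "norm v = 1"
    and X_trans: "\<forall>\<xi>\<in>X. \<forall>c::real. \<xi> + c *\<^sub>R v \<in> X"
    and flow_trans: "\<forall>\<xi>\<in>X. \<forall>c::real. \<forall>t. flow_defined X f t \<xi> \<longrightarrow>
                 flow_defined X f t (\<xi> + c *\<^sub>R v) \<and>
                 flow X f t (\<xi> + c *\<^sub>R v) = flow X f t \<xi> + c *\<^sub>R v"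
  shows "\<forall>\<xi>1\<in>X. \<forall>\<xi>2\<in>X. \<forall>t>0.
           Vfun K v (flow X f t \<xi>1 - flow X f t \<xi>2) \<ge> Vfun K v (\<xi>1 - \<xi>2) \<and>
           (\<xi>1 - \<xi>2 \<notin> span {v} \<longrightarrow>
              Vfun K v (flow X f t \<xi>1 - flow X f t \<xi>2) > Vfun K v (\<xi>1 - \<xi>2))"
proof (intro ballI allI impI conjI)
  fix \<xi>1 \<xi>2 :: "real ^ 'n" and t :: real
  assume \<xi>: "\<xi>1 \<in> X" "\<xi>2 \<in> X" and t: "t > 0"
  have v0: "v \<noteq> 0"
    using v_norm by auto
  define a where "a = Vfun K v (flow X f t \<xi>1 - flow X f t \<xi>2)"
  have "a *\<^sub>R v - (flow X f t \<xi>1 - flow X f t \<xi>2) \<in> K"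
    unfolding a_def by (rule Vfun_attained[OF K_cone K_closed v_int v0])
  note backward = flow_backward_comparison[OF fc K_cone mono X_trans flow_trans \<xi> t this]
  show "Vfun K v (\<xi>1 - \<xi>2) \<le> a"
    by (rule Vfun_le[OF K_cone v_int v0 backward(1)])
  show "Vfun K v (\<xi>1 - \<xi>2) < a" if "\<xi>1 - \<xi>2 \<notin> span {v}"
    by (rule Vfun_less[OF K_cone v_int v0 backward(2)[OF that]])
qed

end
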